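(* The zero points of $\mathbf B$ on the unit sphere are exactly the two critical points of $U^\ast$ outside the equator circle $z=0$, namely the physical centers $\hat{\mathbf p}_0^\pm$ (the shapes of the regular, i.e. equilateral, triangle) on the hemispheres $z>0$ and $z<0$.
   Context: Masses $m_1,m_2,m_3>0$, $m_1+m_2+m_3=1$; $\hat m_1=m_2m_3$, $\hat m_2=m_3m_1$, $\hat m_3=m_1m_2$. The shape sphere (oriented m-triangles modulo rotation with $\sum m_i|\mathbf a_i|^2=1$, with kinematic metric, magnified by factor 2) is identified with the unit sphere $S^2\subset\mathbb R^3$, with the equator $z=0$ the collinear shapes, and $\hat{\mathbf b}_1,\hat{\mathbf b}_2,\hat{\mathbf b}_3$ the unit vectors on the equator representing the binary collision shapes $\mathbf a_2=\mathbf a_3$, $\mathbf a_3=\mathbf a_1$, $\mathbf a_1=\mathbf a_2$. In this picture the Newtonian potential $U=\sum_{i<j}m_im_j/|\mathbf a_i-\mathbf a_j|$ restricted to unit size is $U^\ast(\mathbf p)=\sum_{i=1}^3\frac{k_i}{|\mathbf p-\hat{\mathbf b}_i|}$ with $k_i=\frac{2\hat m_i^{3/2}}{\sqrt{1-m_i}}$, and $\mathbf B(\mathbf p)=\sum_{i=1}^3\frac{k_i\hat{\mathbf b}_i}{|\mathbf p-\hat{\mathbf b}_i|^3}\in\mathbb R^2\times\{0\}$ for $\mathbf p\in S^2$. *)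

theory Defs
  imports "HOL-Analysis.Analysis"
begin

text \<open>Masses are m 1, m 2, m 3; a configuration is a :: nat \<Rightarrow> complex (a 1, a 2, a 3 in the plane).\<close>

definition normalized_config :: "(nat \<Rightarrow> real) \<Rightarrow> (nat \<Rightarrow> complex) \<Rightarrow> bool" where
  "normalized_config m a \<longleftrightarrow>
     (\<Sum>i\<in>{1,2,3::nat}. of_real (m i) * a i) = 0 \<and>
     (\<Sum>i\<in>{1,2,3::nat}. m i * (cmod (a i))\<^sup>2) = 1"

definition jacobi1 :: "(nat \<Rightarrow> real) \<Rightarrow> (nat \<Rightarrow> complex) \<Rightarrow> complex" where
  "jacobi1 m a = of_real (sqrt (m 1 * m 2 / (m 1 + m 2))) * (a 2 - a 1)"

definition jacobi2 :: "(nat \<Rightarrow> real) \<Rightarrow> (nat \<Rightarrow> complex) \<Rightarrow> complex" where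
  "jacobi2 m a = of_real (sqrt (m 3 * (m 1 + m 2))) *
      (a 3 - (of_real (m 1) * a 1 + of_real (m 2) * a 2) / of_real (m 1 + m 2))"

text \<open>Shape map (Hopf map): normalized configurations onto the unit sphere, i.e. the
  shape sphere with kinematic metric magnified by 2; collinear shapes go to z = 0.\<close>
definition shape :: "(nat \<Rightarrow> real) \<Rightarrow> (nat \<Rightarrow> complex) \<Rightarrow> real^3" where
  "shape m a = (let x = jacobi1 m a; y = jacobi2 m a; w = x * cnj y in
     vector [(cmod x)\<^sup>2 - (cmod y)\<^sup>2, 2 * Re w, 2 * Im w])"

definition collision_config :: "(nat \<Rightarrow> real) \<Rightarrow> nat \<Rightarrow> (nat \<Rightarrow> complex)" where
  "collision_config m i = (let t = 1 / sqrt (m i * (1 - m i)) in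
     (\<lambda>j. if j = i then of_real ((1 - m i) * t) else of_real (- m i * t)))"

definition bhat :: "(nat \<Rightarrow> real) \<Rightarrow> nat \<Rightarrow> real^3" where
  "bhat m i = shape m (collision_config m i)"

definition mhat :: "(nat \<Rightarrow> real) \<Rightarrow> nat \<Rightarrow> real" where
  "mhat m i = (\<Prod>j\<in>{1,2,3::nat} - {i}. m j)"

definition kcoef :: "(nat \<Rightarrow> real) \<Rightarrow> nat \<Rightarrow> real" where
  "kcoef m i = 2 * mhat m i powr (3/2) / sqrt (1 - m i)"

definition Ustar :: "(nat \<Rightarrow> real) \<Rightarrow> real^3 \<Rightarrow> real" where
  "Ustar m p = (\<Sum>i\<in>{1,2,3::nat}. kcoef m i / norm (p - bhat m i))"

definition Bfield :: "(nat \<Rightarrow> real) \<Rightarrow> real^3 \<Rightarrow> real^3" where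
  "Bfield m p = (\<Sum>i\<in>{1,2,3::nat}. (kcoef m i / norm (p - bhat m i) ^ 3) *\<^sub>R bhat m i)"

definition sphere_critical :: "(real^3 \<Rightarrow> real) \<Rightarrow> real^3 \<Rightarrow> bool" where
  "sphere_critical f p \<longleftrightarrow>
     (\<exists>D. (f has_derivative D) (at p) \<and> (\<forall>v. v \<bullet> p = 0 \<longrightarrow> D v = 0))"

definition equilateral_shapes :: "(nat \<Rightarrow> real) \<Rightarrow> (real^3) set" where
  "equilateral_shapes m = {shape m a | a. normalized_config m a \<and>
      cmod (a 1 - a 2) = cmod (a 2 - a 3) \<and> cmod (a 2 - a 3) = cmod (a 3 - a 1)}"

end

(*
  For the shape p of a normalized configuration, |p - b_i|^2 = 4 mu_i r_jk^2, where
  mu_i = m_j m_k / (m_j + m_k) is the reduced mass of the pair {j,k} and r_jk its distance.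
  Hence the equilateral shapes are the points of the unit sphere with
  |p - b_i|^2 = 4 mu_i / sigma for i = 1, 2, 3, sigma = m_1 m_2 + m_2 m_3 + m_3 m_1; as the b_i
  lie on the equator and are not collinear, these are a point and its mirror image.

  The collision points satisfy the linear relation sum (1 - m_i) b_i = 0, any two of them are
  independent, and k_i = 2 (1 - m_i) mu_i^(3/2). So B(p) = sum k_i / |p - b_i|^3 b_i vanishes
  iff k_i / |p - b_i|^3 is proportional to 1 - m_i, i.e. iff |p - b_i|^2 is proportional to
  mu_i; the relation forces the factor 4 / sigma on the unit sphere. Finally, the tangential
  part of the gradient of U* at p is the tangential part of B(p), which is horizontal, so off
  the equator p is critical iff B(p) = 0.
*)
theory Submission
  imports Defs
begin

(* keep the mass index in m 1 from being rewritten to Suc 0 *)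
declare One_nat_def [simp del]

lemma vec3_eq_iff: "(p::real^3) = q \<longleftrightarrow> p$1 = q$1 \<and> p$2 = q$2 \<and> p$3 = q$3"
  by (simp add: vec_eq_iff forall_3)

lemma inner_vec3: "inner (p::real^3) q = p$1 * q$1 + p$2 * q$2 + p$3 * q$3"
  by (simp add: inner_vec_def sum_3)

lemma norm_vec3_sq: "norm (p::real^3) ^ 2 = p$1^2 + p$2^2 + p$3^2"
  by (simp add: norm_eq_sqrt_inner inner_vec_def sum_3 power2_eq_square)

lemma norm_diff_sq_unit:
  fixes p b :: "'a::real_inner"
  assumes "norm p = 1" "norm b = 1"
  shows "(norm (p - b))\<^sup>2 = 2 - 2 * inner p b"
  using dot_norm_neg[of p b] assms by simp

lemma scaleR_sum3_eq_0_iff_proportional: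
  fixes b1 b2 b3 :: "'a::real_vector"
  assumes rel: "c1 *\<^sub>R b1 + c2 *\<^sub>R b2 + c3 *\<^sub>R b3 = 0" and c2: "c2 \<noteq> 0"
    and indep: "\<And>x y. x *\<^sub>R b1 + y *\<^sub>R b3 = 0 \<Longrightarrow> x = 0 \<and> y = 0"
  shows "w1 *\<^sub>R b1 + w2 *\<^sub>R b2 + w3 *\<^sub>R b3 = 0 \<longleftrightarrow> (\<exists>t. w1 = t * c1 \<and> w2 = t * c2 \<and> w3 = t * c3)"
proof
  assume w: "w1 *\<^sub>R b1 + w2 *\<^sub>R b2 + w3 *\<^sub>R b3 = 0"
  define t where "t = w2 / c2"
  have "(w1 - t * c1) *\<^sub>R b1 + (w3 - t * c3) *\<^sub>R b3
      = (w1 *\<^sub>R b1 + w2 *\<^sub>R b2 + w3 *\<^sub>R b3) - t *\<^sub>R (c1 *\<^sub>R b1 + c2 *\<^sub>R b2 + c3 *\<^sub>R b3)"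
    using c2 by (simp add: t_def algebra_simps)
  then have "w1 = t * c1 \<and> w3 = t * c3"
    using indep[of "w1 - t * c1" "w3 - t * c3"] w rel by simp
  then show "\<exists>t. w1 = t * c1 \<and> w2 = t * c2 \<and> w3 = t * c3"
    using c2 by (intro exI[of _ t]) (simp add: t_def)
next
  assume "\<exists>t. w1 = t * c1 \<and> w2 = t * c2 \<and> w3 = t * c3"
  then obtain t where "w1 = t * c1" "w2 = t * c2" "w3 = t * c3"
    by blast
  then have "w1 *\<^sub>R b1 + w2 *\<^sub>R b2 + w3 *\<^sub>R b3 = t *\<^sub>R (c1 *\<^sub>R b1 + c2 *\<^sub>R b2 + c3 *\<^sub>R b3)"
    by (simp add: scaleR_add_right)
  then show "w1 *\<^sub>R b1 + w2 *\<^sub>R b2 + w3 *\<^sub>R b3 = 0"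
    using rel by simp
qed

lemma orthogonal_complement_horizontal_eq_0:
  fixes p B :: "real^3"
  assumes "B $ 3 = 0" and "p $ 3 \<noteq> 0"
  shows "(\<forall>v. inner v p = 0 \<longrightarrow> inner v B = 0) \<longleftrightarrow> B = 0"
proof
  assume orth: "\<forall>v. inner v p = 0 \<longrightarrow> inner v B = 0"
  define v :: "real^3" where "v = vector [p$3 * B$1, p$3 * B$2, - (B$1 * p$1 + B$2 * p$2)]"
  have "inner v p = 0"
    by (simp add: v_def inner_vec3 algebra_simps)
  then have "inner v B = 0"
    using orth by blast
  then have "p$3 * ((B$1)\<^sup>2 + (B$2)\<^sup>2) = 0"
    using assms(1) by (simp add: v_def inner_vec3 power2_eq_square algebra_simps)
  then show "B = 0"
    using assms by (simp add: vec3_eq_iff sum_power2_eq_zero_iff)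
qed simp

lemma has_derivative_inverse_dist:
  fixes p b :: "'a::real_inner"
  assumes "p \<noteq> b"
  shows "((\<lambda>x. k / norm (x - b)) has_derivative (\<lambda>v. - k * inner v (p - b) / norm (p - b) ^ 3)) (at p)"
proof -
  have n: "norm (p - b) \<noteq> 0" using assms by simp
  have "((\<lambda>x. norm (x - b)) has_derivative (\<lambda>v. inner v (sgn (p - b)))) (at p)"
    using has_derivative_compose[OF has_derivative_diff[OF has_derivative_ident has_derivative_const]
        has_derivative_norm[of "p - b"]] assms
    by simp
  then have "((\<lambda>x. k / norm (x - b)) has_derivative
      (\<lambda>v. - k * (inverse (norm (p - b)) * inner v (sgn (p - b)) * inverse (norm (p - b))) + 0 / norm (p - b))) (at p)"
    using n by (rule has_derivative_divide[OF has_derivative_const])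
  moreover have "inner v (sgn (p - b)) = inner v (p - b) / norm (p - b)" for v
    by (simp add: sgn_div_norm divide_inverse mult.commute)
  ultimately show ?thesis
    by (rule_tac has_derivative_eq_rhs) (auto simp: fun_eq_iff n field_simps power3_eq_cube)
qed

definition reduced_mass :: "(nat \<Rightarrow> real) \<Rightarrow> nat \<Rightarrow> real" where
  "reduced_mass m i = mhat m i / (1 - m i)"

definition mass_sigma :: "(nat \<Rightarrow> real) \<Rightarrow> real" where
  "mass_sigma m = m 1 * m 2 + m 2 * m 3 + m 3 * m 1"

definition inertia :: "(nat \<Rightarrow> real) \<Rightarrow> (nat \<Rightarrow> complex) \<Rightarrow> real" where
  "inertia m a = m 2 * m 3 * (cmod (a 2 - a 3))\<^sup>2 + m 3 * m 1 * (cmod (a 3 - a 1))\<^sup>2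
     + m 1 * m 2 * (cmod (a 1 - a 2))\<^sup>2"

definition mirror :: "real^3 \<Rightarrow> real^3" where
  "mirror p = vector [p$1, p$2, - p$3]"

definition regular_shapes :: "(nat \<Rightarrow> real) \<Rightarrow> (real^3) set" where
  "regular_shapes m = {p. norm p = 1 \<and>
     (\<forall>i\<in>{1,2,3}. (norm (p - bhat m i))\<^sup>2 = 4 * reduced_mass m i / mass_sigma m)}"

lemma mhat_eq: "mhat m 1 = m 2 * m 3" "mhat m 2 = m 3 * m 1" "mhat m 3 = m 1 * m 2"
  by (simp_all add: mhat_def insert_Diff_if)

locale three_masses =
  fixes m :: "nat \<Rightarrow> real"
  assumes m1_pos: "m 1 > 0" and m2_pos: "m 2 > 0" and m3_pos: "m 3 > 0"
    and mass_sum: "m 1 + m 2 + m 3 = 1"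
begin

lemma one_minus_m: "1 - m 1 = m 2 + m 3" "1 - m 2 = m 1 + m 3" "1 - m 3 = m 1 + m 2"
  using mass_sum by auto

lemma one_minus_m_pos: "i \<in> {1,2,3} \<Longrightarrow> 1 - m i > 0"
  using m1_pos m2_pos m3_pos mass_sum by auto

lemma reduced_mass_pos: "i \<in> {1,2,3} \<Longrightarrow> reduced_mass m i > 0"
  using m1_pos m2_pos m3_pos by (auto simp: reduced_mass_def mhat_eq one_minus_m)

lemma mass_sigma_pos: "mass_sigma m > 0"
  using m1_pos m2_pos m3_pos by (simp add: mass_sigma_def add_pos_pos)

lemma one_minus_m_mult_reduced_mass:
  "(1 - m 1) * reduced_mass m 1 = m 2 * m 3" "(1 - m 2) * reduced_mass m 2 = m 3 * m 1"
  "(1 - m 3) * reduced_mass m 3 = m 1 * m 2"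
  using one_minus_m_pos[of 1] one_minus_m_pos[of 2] one_minus_m_pos[of 3]
  by (simp_all add: reduced_mass_def mhat_eq)

lemma kcoef_eq: "i \<in> {1,2,3} \<Longrightarrow> kcoef m i = 2 * (1 - m i) * sqrt (reduced_mass m i) ^ 3"
proof -
  assume i: "i \<in> {1,2,3}"
  then have pos: "mhat m i > 0" "1 - m i > 0"
    using m1_pos m2_pos m3_pos one_minus_m_pos by (auto simp: mhat_eq)
  have "mhat m i powr (3/2) = mhat m i powr (1 + 1/2)"
    by simp
  also have "\<dots> = mhat m i powr 1 * mhat m i powr (1/2)"
    by (rule powr_add)
  also have "\<dots> = mhat m i * sqrt (mhat m i)"
    using pos by (simp add: powr_half_sqrt)
  finally have "mhat m i powr (3/2) = mhat m i * sqrt (mhat m i)" .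
  moreover have "sqrt (reduced_mass m i) ^ 3 = mhat m i / (1 - m i) * (sqrt (mhat m i) / sqrt (1 - m i))"
    using pos by (simp add: reduced_mass_def power3_eq_cube real_sqrt_divide)
  ultimately show ?thesis
    using pos by (simp add: kcoef_def field_simps)
qed

lemma shape_eq:
  fixes a :: "nat \<Rightarrow> complex"
  defines "u \<equiv> a 2 - a 1" and "w \<equiv> (a 3 - a 1) - of_real (m 2 / (m 1 + m 2)) * (a 2 - a 1)"
  shows "shape m a = vector [m 1 * m 2 / (m 1 + m 2) * (cmod u)\<^sup>2 - m 3 * (m 1 + m 2) * (cmod w)\<^sup>2,
     2 * sqrt (m 1 * m 2 * m 3) * Re (u * cnj w), 2 * sqrt (m 1 * m 2 * m 3) * Im (u * cnj w)]"
proof -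
  define sx where "sx = sqrt (m 1 * m 2 / (m 1 + m 2))"
  define sy where "sy = sqrt (m 3 * (m 1 + m 2))"
  have pos: "m 1 + m 2 > 0" using m1_pos m2_pos by simp
  have "jacobi1 m a = of_real sx * u" by (simp add: jacobi1_def sx_def u_def)
  moreover have "jacobi2 m a = of_real sy * w"
  proof -
    have "complex_of_real (m 1 + m 2) \<noteq> 0" using pos by (metis of_real_eq_0_iff less_irrefl)
    then show ?thesis by (simp add: jacobi2_def sy_def w_def field_simps)
  qed
  moreover have "sqrt (m 1 * m 2 * m 3) = sx * sy"
    using pos by (simp add: sx_def sy_def flip: real_sqrt_mult)
  moreover have "sx\<^sup>2 = m 1 * m 2 / (m 1 + m 2)" "sy\<^sup>2 = m 3 * (m 1 + m 2)"
    using pos m1_pos m2_pos m3_pos by (simp_all add: sx_def sy_def)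
  ultimately show ?thesis
    by (simp add: shape_def norm_mult power_mult_distrib algebra_simps)
qed

lemma shape_collinear:
  fixes A :: "nat \<Rightarrow> real"
  defines "l \<equiv> m 2 / (m 1 + m 2)"
  shows "shape m (\<lambda>j. of_real (A j)) = vector [m 1 * m 2 / (m 1 + m 2) * (A 2 - A 1)\<^sup>2
       - m 3 * (m 1 + m 2) * (A 3 - A 1 - l * (A 2 - A 1))\<^sup>2,
     2 * sqrt (m 1 * m 2 * m 3) * ((A 2 - A 1) * (A 3 - A 1 - l * (A 2 - A 1))), 0]"
proof -
  have "complex_of_real (A 3) - of_real (A 1) - of_real l * (of_real (A 2) - of_real (A 1))
      = of_real (A 3 - A 1 - l * (A 2 - A 1))"
    by simp
  then show ?thesis
    using shape_eq[of "\<lambda>j. of_real (A j)", folded l_def] by (simp flip: of_real_diff)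
qed

lemma bhat_1: "bhat m 1 = vector [(m 2 - m 1 * m 3) / ((m 1 + m 2) * (1 - m 1)),
    2 * sqrt (m 1 * m 2 * m 3) / ((m 1 + m 2) * (1 - m 1)), 0]"
proof -
  define t where "t = 1 / sqrt (m 1 * (1 - m 1))"
  have t2: "t\<^sup>2 = 1 / (m 1 * (1 - m 1))"
    using m1_pos m2_pos m3_pos by (simp add: t_def power_divide one_minus_m)
  have "collision_config m 1 = (\<lambda>j. of_real (if j = 1 then (1 - m 1) * t else - m 1 * t))"
    by (auto simp: collision_config_def Let_def t_def)
  then have "bhat m 1 = vector [m 1 * m 2 / (m 1 + m 2) * t\<^sup>2 - m 3 * (m 1 + m 2) * (m 1 * t / (m 1 + m 2))\<^sup>2,
     2 * sqrt (m 1 * m 2 * m 3) * (m 1 * t\<^sup>2 / (m 1 + m 2)), 0]"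
    using m1_pos m2_pos
    by (simp add: bhat_def shape_collinear field_simps power2_eq_square)
  also have "\<dots> = vector [(m 2 - m 1 * m 3) / ((m 1 + m 2) * (1 - m 1)),
    2 * sqrt (m 1 * m 2 * m 3) / ((m 1 + m 2) * (1 - m 1)), 0]"
  proof -
    have "m 1 \<noteq> 0" "m 1 + m 2 \<noteq> 0" "1 - m 1 \<noteq> 0"
      using m1_pos m2_pos m3_pos mass_sum by auto
    then show ?thesis
      unfolding vec3_eq_iff power_mult_distrib power_divide t2 using mass_sum
      by (simp add: divide_simps) (simp add: power2_eq_square algebra_simps)
  qed
  finally show ?thesis .
qed

lemma bhat_2: "bhat m 2 = vector [(m 1 - m 2 * m 3) / ((m 1 + m 2) * (1 - m 2)),
    - 2 * sqrt (m 1 * m 2 * m 3) / ((m 1 + m 2) * (1 - m 2)), 0]"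
proof -
  define t where "t = 1 / sqrt (m 2 * (1 - m 2))"
  have t2: "t\<^sup>2 = 1 / (m 2 * (1 - m 2))"
    using m1_pos m2_pos m3_pos by (simp add: t_def power_divide one_minus_m)
  have "collision_config m 2 = (\<lambda>j. of_real (if j = 2 then (1 - m 2) * t else - m 2 * t))"
    by (auto simp: collision_config_def Let_def t_def)
  then have "bhat m 2 = vector [m 1 * m 2 / (m 1 + m 2) * t\<^sup>2 - m 3 * (m 1 + m 2) * (m 2 * t / (m 1 + m 2))\<^sup>2,
     - 2 * sqrt (m 1 * m 2 * m 3) * (m 2 * t\<^sup>2 / (m 1 + m 2)), 0]"
    using m1_pos m2_pos
    by (simp add: bhat_def shape_collinear field_simps power2_eq_square)
  also have "\<dots> = vector [(m 1 - m 2 * m 3) / ((m 1 + m 2) * (1 - m 2)),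
    - 2 * sqrt (m 1 * m 2 * m 3) / ((m 1 + m 2) * (1 - m 2)), 0]"
  proof -
    have "m 2 \<noteq> 0" "m 1 + m 2 \<noteq> 0" "1 - m 2 \<noteq> 0"
      using m1_pos m2_pos m3_pos mass_sum by auto
    then show ?thesis
      unfolding vec3_eq_iff power_mult_distrib power_divide t2 using mass_sum
      by (simp add: divide_simps) (simp add: power2_eq_square algebra_simps)
  qed
  finally show ?thesis .
qed

lemma bhat_3: "bhat m 3 = vector [-1, 0, 0]"
proof -
  define t where "t = 1 / sqrt (m 3 * (1 - m 3))"
  have t2: "m 3 * (1 - m 3) * t\<^sup>2 = 1"
    using m1_pos m2_pos m3_pos by (simp add: t_def power_divide one_minus_m)
  have "collision_config m 3 = (\<lambda>j. of_real (if j = 3 then t - m 3 * t else - m 3 * t))"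
    unfolding collision_config_def Let_def t_def[symmetric] by (auto simp: algebra_simps)
  then have "bhat m 3 = vector [- m 3 * (1 - m 3) * t\<^sup>2, 0, 0]"
    by (simp add: bhat_def shape_collinear one_minus_m)
  then show ?thesis
    using t2 by simp
qed

lemma bhat_z: "i \<in> {1,2,3} \<Longrightarrow> bhat m i $ 3 = 0"
  by (auto simp: bhat_1 bhat_2 bhat_3)

lemma norm_bhat: "i \<in> {1,2,3} \<Longrightarrow> norm (bhat m i) = 1"
proof -
  have "m 1 + m 2 \<noteq> 0" "1 - m 1 \<noteq> 0" "1 - m 2 \<noteq> 0" "sqrt (m 1 * m 2 * m 3) ^ 2 = m 1 * m 2 * m 3"
    using m1_pos m2_pos m3_pos mass_sum by auto
  then have "norm (bhat m 1) ^ 2 = 1" "norm (bhat m 2) ^ 2 = 1" "norm (bhat m 3) ^ 2 = 1"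
    unfolding norm_vec3_sq bhat_1 bhat_2 bhat_3 using mass_sum
    by (simp_all add: divide_simps power_mult_distrib) algebra+
  then show "i \<in> {1,2,3} \<Longrightarrow> norm (bhat m i) = 1"
    by (auto simp: abs_square_eq_1)
qed

lemma bhat_linear_relation:
  "(1 - m 1) *\<^sub>R bhat m 1 + (1 - m 2) *\<^sub>R bhat m 2 + (1 - m 3) *\<^sub>R bhat m 3 = 0"
proof -
  have "m 1 + m 2 \<noteq> 0" "1 - m 1 \<noteq> 0" "1 - m 2 \<noteq> 0"
    using m1_pos m2_pos m3_pos mass_sum by auto
  then show ?thesis
    unfolding vec3_eq_iff bhat_1 bhat_2 bhat_3 using mass_sum
    by (simp add: divide_simps) (simp add: algebra_simps)
qed

lemma bhat_independent: "x *\<^sub>R bhat m 1 + y *\<^sub>R bhat m 3 = 0 \<Longrightarrow> x = 0 \<and> y = 0"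
proof -
  assume xy: "x *\<^sub>R bhat m 1 + y *\<^sub>R bhat m 3 = 0"
  have "sqrt (m 1 * m 2 * m 3) / ((m 1 + m 2) * (1 - m 1)) \<noteq> 0"
    using m1_pos m2_pos m3_pos by (simp add: one_minus_m)
  then show "x = 0 \<and> y = 0"
    using xy by (auto simp: vec3_eq_iff bhat_1 bhat_3)
qed

lemma shape_in_sides:
  fixes a :: "nat \<Rightarrow> complex"
  defines "u \<equiv> a 2 - a 1" and "v \<equiv> a 3 - a 1" and "l \<equiv> m 2 / (m 1 + m 2)"
  shows "shape m a = vector [m 1 * m 2 / (m 1 + m 2) * ((Re u)\<^sup>2 + (Im u)\<^sup>2)
       - m 3 * (m 1 + m 2) * ((Re v - l * Re u)\<^sup>2 + (Im v - l * Im u)\<^sup>2),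
     2 * sqrt (m 1 * m 2 * m 3) * (Re u * (Re v - l * Re u) + Im u * (Im v - l * Im u)),
     2 * sqrt (m 1 * m 2 * m 3) * (Im u * Re v - Re u * Im v)]"
    and "inertia m a = m 2 * m 3 * ((Re v - Re u)\<^sup>2 + (Im v - Im u)\<^sup>2)
       + m 3 * m 1 * ((Re v)\<^sup>2 + (Im v)\<^sup>2) + m 1 * m 2 * ((Re u)\<^sup>2 + (Im u)\<^sup>2)"
proof -
  show "shape m a = vector [m 1 * m 2 / (m 1 + m 2) * ((Re u)\<^sup>2 + (Im u)\<^sup>2)
       - m 3 * (m 1 + m 2) * ((Re v - l * Re u)\<^sup>2 + (Im v - l * Im u)\<^sup>2),
     2 * sqrt (m 1 * m 2 * m 3) * (Re u * (Re v - l * Re u) + Im u * (Im v - l * Im u)),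
     2 * sqrt (m 1 * m 2 * m 3) * (Im u * Re v - Re u * Im v)]"
    using shape_eq[of a, folded u_def v_def l_def] by (simp add: cmod_power2 algebra_simps)
  have "cmod (a 2 - a 3) = cmod (v - u)" "cmod (a 3 - a 1) = cmod v" "cmod (a 1 - a 2) = cmod u"
    by (simp_all add: u_def v_def norm_minus_commute)
  then show "inertia m a = m 2 * m 3 * ((Re v - Re u)\<^sup>2 + (Im v - Im u)\<^sup>2)
       + m 3 * m 1 * ((Re v)\<^sup>2 + (Im v)\<^sup>2) + m 1 * m 2 * ((Re u)\<^sup>2 + (Im u)\<^sup>2)"
    by (simp add: inertia_def cmod_power2)
qed

lemma inertia_eq_moment:
  assumes "(\<Sum>i\<in>{1,2,3}. of_real (m i) * a i) = 0"
  shows "(\<Sum>i\<in>{1,2,3}. m i * (cmod (a i))\<^sup>2) = inertia m a"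
proof -
  have lagrange: "(p1 + p2 + p3) * (p1 * x1\<^sup>2 + p2 * x2\<^sup>2 + p3 * x3\<^sup>2) - (p1 * x1 + p2 * x2 + p3 * x3)\<^sup>2
      = p2 * p3 * (x2 - x3)\<^sup>2 + p3 * p1 * (x3 - x1)\<^sup>2 + p1 * p2 * (x1 - x2)\<^sup>2" for p1 p2 p3 x1 x2 x3 :: real
    by (simp add: power2_eq_square algebra_simps)
  have "m 1 * Re (a 1) + m 2 * Re (a 2) + m 3 * Re (a 3) = 0"
    "m 1 * Im (a 1) + m 2 * Im (a 2) + m 3 * Im (a 3) = 0"
    using arg_cong[OF assms, of Re] arg_cong[OF assms, of Im] by (simp_all add: add.assoc)
  then have "m 1 * (Re (a 1))\<^sup>2 + m 2 * (Re (a 2))\<^sup>2 + m 3 * (Re (a 3))\<^sup>2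
      = m 2 * m 3 * (Re (a 2) - Re (a 3))\<^sup>2 + m 3 * m 1 * (Re (a 3) - Re (a 1))\<^sup>2 + m 1 * m 2 * (Re (a 1) - Re (a 2))\<^sup>2"
    "m 1 * (Im (a 1))\<^sup>2 + m 2 * (Im (a 2))\<^sup>2 + m 3 * (Im (a 3))\<^sup>2
      = m 2 * m 3 * (Im (a 2) - Im (a 3))\<^sup>2 + m 3 * m 1 * (Im (a 3) - Im (a 1))\<^sup>2 + m 1 * m 2 * (Im (a 1) - Im (a 2))\<^sup>2"
    using lagrange[of "m 1" "m 2" "m 3" "Re (a 1)" "Re (a 2)" "Re (a 3)"]
      lagrange[of "m 1" "m 2" "m 3" "Im (a 1)" "Im (a 2)" "Im (a 3)"] mass_sum
    by simp_all
  then show ?thesis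
    by (simp add: inertia_def cmod_power2 algebra_simps)
qed

lemma inertia_normalized: "normalized_config m a \<Longrightarrow> inertia m a = 1"
  by (metis inertia_eq_moment normalized_config_def)

lemma norm_shape: "norm (shape m a) = inertia m a"
proof -
  have "m 1 + m 2 \<noteq> 0" "sqrt (m 1 * m 2 * m 3) ^ 2 = m 1 * m 2 * m 3"
    using m1_pos m2_pos m3_pos by auto
  then have "norm (shape m a) ^ 2 = (inertia m a)\<^sup>2"
    unfolding norm_vec3_sq shape_in_sides using mass_sum
    by (simp add: divide_simps power_mult_distrib) algebra
  moreover have "inertia m a \<ge> 0"
    using m1_pos m2_pos m3_pos by (simp add: inertia_def)
  ultimately show ?thesis
    by (simp add: power2_eq_iff_nonneg)
qed

lemma inner_shape_bhat:
  "inner (shape m a) (bhat m 1) = inertia m a - 2 * reduced_mass m 1 * (cmod (a 2 - a 3))\<^sup>2"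
  "inner (shape m a) (bhat m 2) = inertia m a - 2 * reduced_mass m 2 * (cmod (a 3 - a 1))\<^sup>2"
  "inner (shape m a) (bhat m 3) = inertia m a - 2 * reduced_mass m 3 * (cmod (a 1 - a 2))\<^sup>2"
proof -
  define u v where "u = a 2 - a 1" and "v = a 3 - a 1"
  define q where "q = sqrt (m 1 * m 2 * m 3)"
  have sides: "cmod (a 2 - a 3) = cmod (v - u)" "cmod (a 3 - a 1) = cmod v" "cmod (a 1 - a 2) = cmod u"
    by (simp_all add: u_def v_def norm_minus_commute)
  have nz: "m 1 + m 2 \<noteq> 0" "m 1 \<noteq> 1" "m 2 \<noteq> 1" "m 3 \<noteq> 1"
    using m1_pos m2_pos m3_pos mass_sum by auto
  have q2: "q\<^sup>2 = m 1 * m 2 * m 3"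
    using m1_pos m2_pos m3_pos by (simp add: q_def)
  note unfold_all = inner_vec3 shape_in_sides reduced_mass_def mhat_eq q_def[symmetric]
      u_def[symmetric] v_def[symmetric] sides
  show "inner (shape m a) (bhat m 1) = inertia m a - 2 * reduced_mass m 1 * (cmod (a 2 - a 3))\<^sup>2"
    unfolding unfold_all bhat_1
    by (simp add: divide_simps cmod_power2 nz) (use q2 mass_sum in algebra)
  show "inner (shape m a) (bhat m 2) = inertia m a - 2 * reduced_mass m 2 * (cmod (a 3 - a 1))\<^sup>2"
    unfolding unfold_all bhat_2
    by (simp add: divide_simps cmod_power2 nz) (use q2 mass_sum in algebra)
  show "inner (shape m a) (bhat m 3) = inertia m a - 2 * reduced_mass m 3 * (cmod (a 1 - a 2))\<^sup>2"
    unfolding unfold_all bhat_3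
    by (simp add: divide_simps cmod_power2 nz) (use mass_sum in algebra)
qed

lemma norm_shape_minus_bhat:
  assumes "normalized_config m a"
  shows "(norm (shape m a - bhat m 1))\<^sup>2 = 4 * reduced_mass m 1 * (cmod (a 2 - a 3))\<^sup>2"
    "(norm (shape m a - bhat m 2))\<^sup>2 = 4 * reduced_mass m 2 * (cmod (a 3 - a 1))\<^sup>2"
    "(norm (shape m a - bhat m 3))\<^sup>2 = 4 * reduced_mass m 3 * (cmod (a 1 - a 2))\<^sup>2"
  using norm_diff_sq_unit[OF _ norm_bhat] inner_shape_bhat norm_shape inertia_normalized[OF assms]
  by simp_all

lemma regular_shapesD:
  assumes "p \<in> regular_shapes m"
  shows "norm p = 1" and "i \<in> {1,2,3} \<Longrightarrow> (norm (p - bhat m i))\<^sup>2 = 4 * reduced_mass m i / mass_sigma m"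
  using assms by (auto simp: regular_shapes_def)

lemma shape_regular_if_equilateral:
  assumes "normalized_config m a"
    and "cmod (a 1 - a 2) = cmod (a 2 - a 3)" "cmod (a 2 - a 3) = cmod (a 3 - a 1)"
  shows "shape m a \<in> regular_shapes m"
proof -
  define L where "L = cmod (a 1 - a 2)"
  have sides: "cmod (a 1 - a 2) = L" "cmod (a 2 - a 3) = L" "cmod (a 3 - a 1) = L"
    using assms(2,3) by (simp_all add: L_def)
  have "mass_sigma m * L\<^sup>2 = 1"
    using inertia_normalized[OF assms(1)] sides
    by (simp add: inertia_def mass_sigma_def algebra_simps)
  then have "L\<^sup>2 = 1 / mass_sigma m"
    using mass_sigma_pos by (simp add: field_simps)
  then show ?thesis
    using norm_shape_minus_bhat[OF assms(1)] norm_shape inertia_normalized[OF assms(1)] sides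
    by (auto simp: regular_shapes_def)
qed

lemma regular_shapes_not_bhat: "p \<in> regular_shapes m \<Longrightarrow> p \<notin> bhat m ` {1,2,3}"
  using reduced_mass_pos mass_sigma_pos by (force simp: regular_shapes_def)

lemma mirror_regular_shapes:
  assumes "p \<in> regular_shapes m"
  shows "mirror p \<in> regular_shapes m"
proof -
  have dist: "(norm (mirror p - b))\<^sup>2 = (norm (p - b))\<^sup>2" if "b $ 3 = 0" for b
    unfolding norm_vec3_sq using that by (simp add: mirror_def)
  moreover have "norm (mirror p) = norm p"
    using dist[of 0] by (simp add: power2_eq_iff_nonneg)
  ultimately show ?thesis
    using assms bhat_z by (simp add: regular_shapes_def)
qed

lemma regular_shapes_eq:
  assumes P: "P \<in> regular_shapes m"
  shows "regular_shapes m = {P, mirror P}"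
proof (intro equalityI subsetI)
  fix p assume p: "p \<in> regular_shapes m"
  have "inner p (bhat m i) = inner P (bhat m i)" if i: "i \<in> {1,2,3}" for i
  proof -
    have "(norm (p - bhat m i))\<^sup>2 = (norm (P - bhat m i))\<^sup>2"
      using regular_shapesD[OF p] regular_shapesD[OF P] i by simp
    then show ?thesis
      using norm_diff_sq_unit[OF _ norm_bhat[OF i]] regular_shapesD(1)[OF p] regular_shapesD(1)[OF P]
      by simp
  qed
  then have "inner p (bhat m 3) = inner P (bhat m 3)" "inner p (bhat m 1) = inner P (bhat m 1)"
    by simp_all
  moreover have "sqrt (m 1 * m 2 * m 3) / ((m 1 + m 2) * (1 - m 1)) \<noteq> 0"
    using m1_pos m2_pos m3_pos by (simp add: one_minus_m)
  ultimately have 12: "p $ 1 = P $ 1" "p $ 2 = P $ 2"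
    by (simp_all add: inner_vec3 bhat_1 bhat_3)
  moreover have "(p $ 3)\<^sup>2 = (P $ 3)\<^sup>2"
    using regular_shapesD(1)[OF p] regular_shapesD(1)[OF P] 12 norm_vec3_sq[of p] norm_vec3_sq[of P]
    by simp
  ultimately show "p \<in> {P, mirror P}"
    by (auto simp: vec3_eq_iff mirror_def power2_eq_iff)
qed (use P mirror_regular_shapes in auto)

lemma shape_cnj: "shape m (\<lambda>j. cnj (a j)) = mirror (shape m a)"
proof -
  have "jacobi1 m (\<lambda>j. cnj (a j)) = cnj (jacobi1 m a)" "jacobi2 m (\<lambda>j. cnj (a j)) = cnj (jacobi2 m a)"
    by (simp_all add: jacobi1_def jacobi2_def)
  then show ?thesis
    by (simp add: shape_def mirror_def Let_def)
qed

lemma normalized_config_cnj: "normalized_config m a \<Longrightarrow> normalized_config m (\<lambda>j. cnj (a j))"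
  unfolding normalized_config_def by (metis (no_types, lifting) complex_cnj_zero complex_mod_cnj
      cnj_sum complex_cnj_mult complex_cnj_complex_of_real sum.cong)

lemma sum_mass_centered:
  "(\<Sum>i\<in>{1,2,3}. of_real (m i) * (b i - (\<Sum>k\<in>{1,2,3}. of_real (m k) * b k))) = (0::complex)"
proof -
  have "(\<Sum>i\<in>{1,2,3::nat}. complex_of_real (m i)) = 1"
    using mass_sum by (simp flip: of_real_add)
  then show ?thesis
    by (simp add: right_diff_distrib sum_subtractf flip: sum_distrib_right)
qed

lemma exists_equilateral_config:
  "\<exists>a. normalized_config m a \<and> cmod (a 1 - a 2) = cmod (a 2 - a 3) \<and>
     cmod (a 2 - a 3) = cmod (a 3 - a 1) \<and> shape m a $ 3 > 0"
proof -
  define L where "L = 1 / sqrt (mass_sigma m)"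
  \<comment> \<open>clockwise orientation, which puts the shape in the upper hemisphere\<close>
  define e where "e = Complex (L / 2) (- L * sqrt 3 / 2)"
  define b where "b j = (if j = 1 then 0 else if j = 2 then of_real L else e)" for j :: nat
  define a where "a j = b j - (\<Sum>k\<in>{1,2,3}. of_real (m k) * b k)" for j
  have L: "L > 0" "mass_sigma m * L\<^sup>2 = 1"
    using mass_sigma_pos by (simp_all add: L_def power_divide)
  have diff: "a 1 - a 2 = - of_real L" "a 2 - a 3 = of_real L - e" "a 3 - a 1 = e"
    by (simp_all add: a_def b_def)
  have sides: "cmod (a 1 - a 2) = L" "cmod (a 2 - a 3) = L" "cmod (a 3 - a 1) = L"
    using L(1) unfolding diff
    by (simp_all add: e_def cmod_def power2_eq_square field_simps real_sqrt_mult_self)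
  have com: "(\<Sum>i\<in>{1,2,3}. of_real (m i) * a i) = 0"
    unfolding a_def by (rule sum_mass_centered)
  have "inertia m a = 1"
    using sides L(2) by (simp add: inertia_def mass_sigma_def algebra_simps)
  then have "normalized_config m a"
    using com inertia_eq_moment[OF com] by (simp add: normalized_config_def)
  moreover have "shape m a $ 3 > 0"
  proof -
    have "a 2 - a 1 = of_real L" "a 3 - a 1 = e" by (simp_all add: a_def b_def)
    then have "shape m a $ 3 = sqrt (m 1 * m 2 * m 3) * sqrt 3 * L\<^sup>2"
      by (simp add: shape_in_sides e_def power2_eq_square)
    then show ?thesis
      using L(1) m1_pos m2_pos m3_pos by simp
  qed
  ultimately show ?thesis
    using sides by metis
qed

lemma equilateral_shapes_eq_regular_shapes: "equilateral_shapes m = regular_shapes m"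
proof
  show "equilateral_shapes m \<subseteq> regular_shapes m"
  proof
    fix p assume "p \<in> equilateral_shapes m"
    then obtain a where "p = shape m a" "normalized_config m a"
      "cmod (a 1 - a 2) = cmod (a 2 - a 3)" "cmod (a 2 - a 3) = cmod (a 3 - a 1)"
      unfolding equilateral_shapes_def by blast
    then show "p \<in> regular_shapes m"
      using shape_regular_if_equilateral by blast
  qed
next
  obtain a where a: "normalized_config m a" "cmod (a 1 - a 2) = cmod (a 2 - a 3)"
      "cmod (a 2 - a 3) = cmod (a 3 - a 1)"
    using exists_equilateral_config by blast
  then have "shape m a \<in> equilateral_shapes m" "shape m (\<lambda>j. cnj (a j)) \<in> equilateral_shapes m"
    unfolding equilateral_shapes_def using normalized_config_cnj[OF a(1)]
    by (auto simp flip: complex_cnj_diff)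
  moreover have "regular_shapes m = {shape m a, mirror (shape m a)}"
    using regular_shapes_eq shape_regular_if_equilateral[OF a] by blast
  ultimately show "regular_shapes m \<subseteq> equilateral_shapes m"
    by (simp add: shape_cnj)
qed

lemma Bfield_z: "Bfield m p $ 3 = 0"
  by (simp add: Bfield_def bhat_z)

lemma Bfield_eq_0_iff_proportional:
  "Bfield m p = 0 \<longleftrightarrow> (\<exists>t. \<forall>i\<in>{1,2,3}. kcoef m i / norm (p - bhat m i) ^ 3 = t * (1 - m i))"
proof -
  have "1 - m 2 \<noteq> 0"
    using one_minus_m m1_pos m3_pos by simp
  from scaleR_sum3_eq_0_iff_proportional[OF bhat_linear_relation this bhat_independent]
  show ?thesis
    by (simp add: Bfield_def add.assoc)
qed

lemma kcoef_weights_proportional_iff: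
  assumes r: "\<And>i. i \<in> {1,2,3} \<Longrightarrow> r i > 0"
  shows "(\<exists>t. \<forall>i\<in>{1,2,3}. kcoef m i / r i ^ 3 = t * (1 - m i))
     \<longleftrightarrow> (\<forall>i\<in>{1,2,3}. sqrt (reduced_mass m i) / r i = sqrt (reduced_mass m 3) / r 3)"
proof -
  define s where "s i = sqrt (reduced_mass m i) / r i" for i
  have s_pos: "s i > 0" if "i \<in> {1,2,3}" for i
    using r[OF that] reduced_mass_pos[OF that] by (simp add: s_def)
  have weight: "kcoef m i / r i ^ 3 = 2 * (1 - m i) * s i ^ 3" if "i \<in> {1,2,3}" for i
    using kcoef_eq[OF that] by (simp add: s_def power_divide)
  have "(\<exists>t. \<forall>i\<in>{1,2,3}. kcoef m i / r i ^ 3 = t * (1 - m i)) \<longleftrightarrow> (\<forall>i\<in>{1,2,3}. s i = s 3)"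
  proof
    assume "\<exists>t. \<forall>i\<in>{1,2,3}. kcoef m i / r i ^ 3 = t * (1 - m i)"
    then obtain t where t: "\<forall>i\<in>{1,2,3}. kcoef m i / r i ^ 3 = t * (1 - m i)"
      by blast
    have "\<forall>i\<in>{1,2,3}. s i ^ 3 = t / 2"
    proof
      fix i :: nat assume i: "i \<in> {1,2,3}"
      have "kcoef m i / r i ^ 3 = t * (1 - m i)"
        using t i by blast
      then have "(1 - m i) * (2 * s i ^ 3) = (1 - m i) * t"
        unfolding weight[OF i] by (simp add: algebra_simps)
      then show "s i ^ 3 = t / 2"
        using one_minus_m_pos[OF i] by simp
    qed
    then show "\<forall>i\<in>{1,2,3}. s i = s 3"
      using s_pos by (metis insertCI less_imp_le power_eq_imp_eq_base zero_less_numeral)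
  qed (use weight in \<open>auto intro: exI[of _ "2 * s 3 ^ 3"]\<close>)
  then show ?thesis
    by (simp add: s_def)
qed

lemma dist_sq_proportional_iff:
  assumes r: "\<And>i. i \<in> {1,2,3} \<Longrightarrow> r i > 0"
  shows "(\<exists>c. \<forall>i\<in>{1,2,3}. (r i)\<^sup>2 = c * reduced_mass m i)
     \<longleftrightarrow> (\<forall>i\<in>{1,2,3}. sqrt (reduced_mass m i) / r i = sqrt (reduced_mass m 3) / r 3)"
proof
  assume "\<exists>c. \<forall>i\<in>{1,2,3}. (r i)\<^sup>2 = c * reduced_mass m i"
  then obtain c where c: "\<forall>i\<in>{1,2,3}. (r i)\<^sup>2 = c * reduced_mass m i"
    by blast
  have "(sqrt (reduced_mass m i) / r i)\<^sup>2 = 1 / c" if i: "i \<in> {1,2,3}" for i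
  proof -
    have "(r i)\<^sup>2 = c * reduced_mass m i"
      using c i by blast
    then show ?thesis
      using r[OF i] reduced_mass_pos[OF i] by (simp add: power_divide)
  qed
  moreover have "sqrt (reduced_mass m i) / r i > 0" if "i \<in> {1,2,3}" for i
    using r[OF that] reduced_mass_pos[OF that] by simp
  ultimately show "\<forall>i\<in>{1,2,3}. sqrt (reduced_mass m i) / r i = sqrt (reduced_mass m 3) / r 3"
    by (metis insertCI less_imp_le power2_eq_iff_nonneg)
next
  assume eq: "\<forall>i\<in>{1,2,3}. sqrt (reduced_mass m i) / r i = sqrt (reduced_mass m 3) / r 3"
  define s where "s = sqrt (reduced_mass m 3) / r 3"
  have "(r i)\<^sup>2 = 1 / s\<^sup>2 * reduced_mass m i" if i: "i \<in> {1,2,3}" for i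
  proof -
    have "sqrt (reduced_mass m i) / r i = s"
      using eq i unfolding s_def by blast
    then have "r i = sqrt (reduced_mass m i) / s"
      using r[OF i] reduced_mass_pos[OF i] by (auto simp: field_simps)
    then show ?thesis
      using reduced_mass_pos[OF i] by (simp add: power_divide)
  qed
  then show "\<exists>c. \<forall>i\<in>{1,2,3}. (r i)\<^sup>2 = c * reduced_mass m i"
    by blast
qed

lemma distance_scale_on_sphere:
  assumes p: "norm p = 1" and c: "\<forall>i\<in>{1,2,3}. (norm (p - bhat m i))\<^sup>2 = c * reduced_mass m i"
  shows "c = 4 / mass_sigma m"
proof -
  have dist: "(norm (p - bhat m i))\<^sup>2 = 2 - 2 * inner p (bhat m i)" if "i \<in> {1,2,3}" for i
    using norm_diff_sq_unit[OF p norm_bhat[OF that]] .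
  have "inner p ((1 - m 1) *\<^sub>R bhat m 1 + (1 - m 2) *\<^sub>R bhat m 2 + (1 - m 3) *\<^sub>R bhat m 3) = 0"
    by (simp add: bhat_linear_relation)
  then have sum_dist: "(1 - m 1) * (norm (p - bhat m 1))\<^sup>2 + (1 - m 2) * (norm (p - bhat m 2))\<^sup>2
      + (1 - m 3) * (norm (p - bhat m 3))\<^sup>2 = 4"
    using mass_sum by (simp add: dist inner_add_right algebra_simps)
  have sigma: "mass_sigma m = (1 - m 1) * reduced_mass m 1 + (1 - m 2) * reduced_mass m 2
      + (1 - m 3) * reduced_mass m 3"
    by (simp add: mass_sigma_def one_minus_m_mult_reduced_mass)
  have "c * mass_sigma m = (1 - m 1) * (c * reduced_mass m 1) + (1 - m 2) * (c * reduced_mass m 2)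
      + (1 - m 3) * (c * reduced_mass m 3)"
    unfolding sigma by (simp add: algebra_simps)
  also have "\<dots> = 4"
    using c sum_dist by simp
  finally have "c * mass_sigma m = 4" .
  then show ?thesis
    using mass_sigma_pos by (simp add: field_simps)
qed

lemma Bfield_eq_0_iff:
  assumes p: "norm p = 1" and "p \<notin> bhat m ` {1,2,3}"
  shows "Bfield m p = 0 \<longleftrightarrow> p \<in> regular_shapes m"
proof -
  have r: "norm (p - bhat m i) > 0" if "i \<in> {1,2,3}" for i
    using assms(2) that by auto
  have "Bfield m p = 0 \<longleftrightarrow> (\<exists>t. \<forall>i\<in>{1,2,3}. kcoef m i / norm (p - bhat m i) ^ 3 = t * (1 - m i))"
    by (rule Bfield_eq_0_iff_proportional)
  also have "\<dots> \<longleftrightarrow> (\<forall>i\<in>{1,2,3}. sqrt (reduced_mass m i) / norm (p - bhat m i)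
      = sqrt (reduced_mass m 3) / norm (p - bhat m 3))"
    by (rule kcoef_weights_proportional_iff) (rule r)
  also have "\<dots> \<longleftrightarrow> (\<exists>c. \<forall>i\<in>{1,2,3}. (norm (p - bhat m i))\<^sup>2 = c * reduced_mass m i)"
    by (rule dist_sq_proportional_iff[symmetric]) (rule r)
  also have "\<dots> \<longleftrightarrow> (\<forall>i\<in>{1,2,3}. (norm (p - bhat m i))\<^sup>2 = 4 / mass_sigma m * reduced_mass m i)"
    using distance_scale_on_sphere[OF p] by blast
  also have "\<dots> \<longleftrightarrow> p \<in> regular_shapes m"
    using p by (simp add: regular_shapes_def)
  finally show ?thesis .
qed

lemma Bfield_zeros_eq_regular_shapes:
  "{p. norm p = 1 \<and> p \<notin> bhat m ` {1,2,3} \<and> Bfield m p = 0} = regular_shapes m"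
  using Bfield_eq_0_iff regular_shapes_not_bhat regular_shapesD(1) by blast

lemma Ustar_has_derivative:
  assumes "p \<notin> bhat m ` {1,2,3}"
  shows "(Ustar m has_derivative
     (\<lambda>v. inner v (Bfield m p) - inner v p * (\<Sum>i\<in>{1,2,3}. kcoef m i / norm (p - bhat m i) ^ 3))) (at p)"
proof -
  have "((\<lambda>x. \<Sum>i\<in>{1,2,3}. kcoef m i / norm (x - bhat m i)) has_derivative
      (\<lambda>v. \<Sum>i\<in>{1,2,3}. - kcoef m i * inner v (p - bhat m i) / norm (p - bhat m i) ^ 3)) (at p)"
    using assms by (intro has_derivative_sum has_derivative_inverse_dist) auto
  then show ?thesis
    unfolding Ustar_def[abs_def]
    by (rule has_derivative_eq_rhs)
      (simp add: fun_eq_iff Bfield_def inner_sum_right inner_diff_right sum_distrib_left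
        sum_subtractf diff_divide_distrib algebra_simps)
qed

lemma sphere_critical_Ustar_iff:
  assumes "p $ 3 \<noteq> 0"
  shows "sphere_critical (Ustar m) p \<longleftrightarrow> Bfield m p = 0"
proof -
  have "p \<notin> bhat m ` {1,2,3}"
    using assms bhat_z by auto
  note D = Ustar_has_derivative[OF this]
  have "sphere_critical (Ustar m) p \<longleftrightarrow> (\<forall>v. inner v p = 0 \<longrightarrow> inner v (Bfield m p) = 0)"
    unfolding sphere_critical_def using D has_derivative_unique[OF _ D] by force
  also have "\<dots> \<longleftrightarrow> Bfield m p = 0"
    using orthogonal_complement_horizontal_eq_0[OF Bfield_z assms] .
  finally show ?thesis .
qed

lemma off_equator_critical_points_eq:
  "{p. norm p = 1 \<and> p $ 3 \<noteq> 0 \<and> sphere_critical (Ustar m) p} = {p \<in> regular_shapes m. p $ 3 \<noteq> 0}"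
proof (intro equalityI subsetI)
  fix p assume "p \<in> {p. norm p = 1 \<and> p $ 3 \<noteq> 0 \<and> sphere_critical (Ustar m) p}"
  then have p: "norm p = 1" "p $ 3 \<noteq> 0" "Bfield m p = 0"
    using sphere_critical_Ustar_iff by auto
  moreover have "p \<notin> bhat m ` {1,2,3}"
    using p(2) bhat_z by auto
  ultimately show "p \<in> {p \<in> regular_shapes m. p $ 3 \<noteq> 0}"
    using Bfield_eq_0_iff by blast
next
  fix p assume "p \<in> {p \<in> regular_shapes m. p $ 3 \<noteq> 0}"
  then show "p \<in> {p. norm p = 1 \<and> p $ 3 \<noteq> 0 \<and> sphere_critical (Ustar m) p}"
    using regular_shapesD(1) regular_shapes_not_bhat Bfield_eq_0_iff sphere_critical_Ustar_iff by blast
qed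

end

theorem mainTheorem18:
  fixes m :: "nat \<Rightarrow> real"
  assumes "m 1 > 0" and "m 2 > 0" and "m 3 > 0" and "m 1 + m 2 + m 3 = 1"
  shows "\<exists>p0plus p0minus.
     equilateral_shapes m = {p0plus, p0minus} \<and> p0plus $ 3 > 0 \<and> p0minus $ 3 < 0 \<and>
     {p. norm p = 1 \<and> p $ 3 \<noteq> 0 \<and> sphere_critical (Ustar m) p} = {p0plus, p0minus} \<and>
     {p. norm p = 1 \<and> p \<notin> bhat m ` {1,2,3} \<and> Bfield m p = 0} = {p0plus, p0minus}"
proof -
  interpret three_masses m
    using assms by unfold_locales
  obtain a where a: "normalized_config m a" "cmod (a 1 - a 2) = cmod (a 2 - a 3)"
      "cmod (a 2 - a 3) = cmod (a 3 - a 1)" and up: "shape m a $ 3 > 0"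
    using exists_equilateral_config by blast
  define P where "P = shape m a"
  have "P \<in> regular_shapes m"
    unfolding P_def using shape_regular_if_equilateral[OF a] .
  then have regular: "regular_shapes m = {P, mirror P}"
    by (rule regular_shapes_eq)
  have z: "P $ 3 > 0" "mirror P $ 3 < 0"
    using up by (simp_all add: P_def mirror_def)
  then have "{p \<in> regular_shapes m. p $ 3 \<noteq> 0} = {P, mirror P}"
    unfolding regular by auto
  then show ?thesis
    using z regular equilateral_shapes_eq_regular_shapes off_equator_critical_points_eq
      Bfield_zeros_eq_regular_shapes
    by metis
qed

end
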